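(* Let $\{x_k\}$ be generated by the Subgradient-InexP method with Polyak's stepsize rule, under the standing assumptions (in particular $\Omega^*\neq\varnothing$). Then $\{x_k\}$ converges to a point $x_*\in\Omega^*$.
   Context: Problem: minimize a convex $f:\mathbb{R}^n\to\mathbb{R}$ over a nonempty closed convex $C\subset\mathbb{R}^n$; $f^*:=\inf_{x\in C}f(x)$, $\Omega^*$ the set of minimizers. For $\epsilon\ge0$, $\partial_\epsilon f(x):=\{s: f(y)\ge f(x)+\langle s,y-x\rangle-\epsilon\ \forall y\}$. Relative error tolerance function: any $\varphi_{\gamma,\theta,\lambda}:(\mathbb{R}^n)^3\to[0,\infty)$ with $\varphi_{\gamma,\theta,\lambda}(u,v,w)\le\gamma\|v-u\|^2+\theta\|w-v\|^2+\lambda\|w-u\|^2$; for $u\in C$, $\mathcal{P}_C(\varphi_{\gamma,\theta,\lambda},u,v):=\{w\in C:\langle v-w,z-w\rangle\le\varphi_{\gamma,\theta,\lambda}(u,v,w)\ \forall z\in C\}$. Subgradient-InexP method: $x_0\in C$; at iteration $k$, if $0\in\partial f(x_k)$ stop; otherwise choose nonzero $s_k\in\partial_{\epsilon_k}f(x_k)$, stepsize $t_k>0$, and $x_{k+1}\in\mathcal{P}_C(\varphi_{\gamma_k,\theta_k,\lambda_k},x_k,x_k-t_ks_k)$. Standing assumptions: $\gamma_k\in[0,\bar\gamma)$, $\theta_k\in[0,\bar\theta)$, $\lambda_k\in[0,\bar\lambda)$ with $\bar\gamma\ge0$, $\bar\theta,\bar\lambda\in[0,1/2)$; the sequence is infinite.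 Let $\nu:=\frac{1+2\bar\gamma}{1-2\bar\lambda}$. Polyak's stepsize rule: $\Omega^*\neq\varnothing$, $f^*>-\infty$ known; $\mu\ge0$, $\underline\beta>0$, $\bar\beta>0$; $\{\epsilon_k\}$ nonincreasing, $0<\underline\beta\le\beta_k\le\bar\beta<\frac{1}{2\mu+\nu}$ and $0<\epsilon_k\le\mu\beta_k[f(x_k)-f^*]$ for all $k$; $t_k:=\beta_k\frac{f(x_k)-f^*}{\|s_k\|^2}$. *)

theory Defs
  imports "HOL-Analysis.Analysis"
begin

definition eps_subdiff :: "('a::real_inner \<Rightarrow> real) \<Rightarrow> real \<Rightarrow> 'a \<Rightarrow> 'a set" where
  "eps_subdiff f \<epsilon> x = {s. \<forall>y. f y \<ge> f x + inner s (y - x) - \<epsilon>}"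

definition opt_val :: "('a \<Rightarrow> real) \<Rightarrow> 'a set \<Rightarrow> real" where
  "opt_val f C = (INF x\<in>C. f x)"

definition opt_set :: "('a \<Rightarrow> real) \<Rightarrow> 'a set \<Rightarrow> 'a set" where
  "opt_set f C = {x\<in>C. \<forall>y\<in>C. f x \<le> f y}"

definition rel_err_tol :: "real \<Rightarrow> real \<Rightarrow> real \<Rightarrow> ('a::real_normed_vector \<Rightarrow> 'a \<Rightarrow> 'a \<Rightarrow> real) \<Rightarrow> bool" where
  "rel_err_tol \<gamma> \<theta> lam \<phi> \<longleftrightarrow>
     (\<forall>u v w. 0 \<le> \<phi> u v w \<and>
        \<phi> u v w \<le> \<gamma> * (norm (v - u))\<^sup>2 + \<theta> * (norm (w - v))\<^sup>2 + lam * (norm (w - u))\<^sup>2)"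

definition inexact_proj :: "'a::real_inner set \<Rightarrow> ('a \<Rightarrow> 'a \<Rightarrow> 'a \<Rightarrow> real) \<Rightarrow> 'a \<Rightarrow> 'a \<Rightarrow> 'a set" where
  "inexact_proj C \<phi> u v = {w\<in>C. \<forall>z\<in>C. inner (v - w) (z - w) \<le> \<phi> u v w}"

end

theory Submission
  imports Defs
begin

text \<open>
  For every minimiser \<open>p\<close>, one Polyak step with an inexact projection satisfies
  \<open>\<parallel>x\<^sub>k\<^sub>+\<^sub>1 - p\<parallel>\<^sup>2 \<le> \<parallel>x\<^sub>k - p\<parallel>\<^sup>2 - t\<^sub>k (f x\<^sub>k - f\<^sup>*)\<close>: the relative projection
  error costs at most a factor \<open>\<nu>\<close> on \<open>\<parallel>t\<^sub>k s\<^sub>k\<parallel>\<^sup>2 = \<beta>\<^sub>k t\<^sub>k (f x\<^sub>k - f\<^sup>*)\<close>, the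
  \<open>\<epsilon>\<close>-subgradient error at most \<open>2 \<mu> \<beta>\<^sub>k t\<^sub>k (f x\<^sub>k - f\<^sup>*)\<close>, and the bound on \<open>\<beta>\<^sub>k\<close> keeps
  the net effect a decrease. Hence the iterates are Fejer monotone with respect to the solution
  set, so they stay bounded, the subgradients stay bounded, and the summable decrements
  \<open>\<beta>\<^sub>k (f x\<^sub>k - f\<^sup>*)\<^sup>2 / \<parallel>s\<^sub>k\<parallel>\<^sup>2\<close> force \<open>f x\<^sub>k \<rightarrow> f\<^sup>*\<close>. Every cluster point is then a
  minimiser, and Fejer monotonicity upgrades subsequential to full convergence.
\<close>

lemma inexact_proj_dist_sq_le:
  fixes u v w z :: "'a::real_inner"
  assumes w: "w \<in> inexact_proj C \<phi> u v" and \<phi>: "rel_err_tol \<gamma> \<theta> lam \<phi>"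
    and z: "z \<in> C" and \<theta>: "\<theta> \<le> 1/2"
  shows "(norm (w - z))\<^sup>2 \<le> (norm (v - z))\<^sup>2 + 2 * \<gamma> * (norm (v - u))\<^sup>2 + 2 * lam * (norm (w - u))\<^sup>2"
proof -
  have "inner (v - w) (z - w) \<le> \<phi> u v w"
    using w z unfolding inexact_proj_def by auto
  also have "\<dots> \<le> \<gamma> * (norm (v - u))\<^sup>2 + \<theta> * (norm (v - w))\<^sup>2 + lam * (norm (w - u))\<^sup>2"
    using \<phi> unfolding rel_err_tol_def by (simp add: norm_minus_commute)
  also have "\<theta> * (norm (v - w))\<^sup>2 \<le> 1/2 * (norm (v - w))\<^sup>2"
    using \<theta> by (intro mult_right_mono) auto
  finally have "inner (v - w) (z - w) \<le> \<gamma> * (norm (v - u))\<^sup>2 + 1/2 * (norm (v - w))\<^sup>2 + lam * (norm (w - u))\<^sup>2"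
    by simp
  moreover have "(norm (v - z))\<^sup>2 = (norm (v - w))\<^sup>2 - 2 * inner (v - w) (z - w) + (norm (w - z))\<^sup>2"
    by (simp add: power2_norm_eq_inner inner_diff_left inner_diff_right inner_commute)
  ultimately show ?thesis by linarith
qed

lemma inexact_proj_dist_sq_le_uniform:
  fixes u v w z :: "'a::real_inner"
  assumes w: "w \<in> inexact_proj C \<phi> u v" and \<phi>: "rel_err_tol \<gamma> \<theta> lam \<phi>"
    and u: "u \<in> C" and z: "z \<in> C" and \<theta>: "\<theta> \<le> 1/2"
    and \<gamma>: "0 \<le> \<gamma>" "\<gamma> \<le> \<gamma>bar" and lam: "0 \<le> lam" "lam \<le> lambar" "lambar < 1/2"
  shows "(norm (w - z))\<^sup>2 \<le> (norm (v - z))\<^sup>2 + ((1 + 2 * \<gamma>bar) / (1 - 2 * lambar) - 1) * (norm (v - u))\<^sup>2"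
proof -
  define T where "T = (norm (v - u))\<^sup>2"
  define A where "A = (norm (w - u))\<^sup>2"
  define \<nu> where "\<nu> = (1 + 2 * \<gamma>) / (1 - 2 * lam)"
  \<comment> \<open>Taking \<open>z = u\<close> bounds \<open>\<parallel>w - u\<parallel>\<^sup>2\<close> by \<open>\<parallel>v - u\<parallel>\<^sup>2\<close>, so the \<open>lam\<close>-term can be absorbed.\<close>
  have "A \<le> T + 2 * \<gamma> * T + 2 * lam * A"
    using inexact_proj_dist_sq_le[OF w \<phi> u \<theta>] unfolding T_def A_def by simp
  then have "(1 - 2 * lam) * A \<le> (1 + 2 * \<gamma>) * T"
    by (simp add: algebra_simps)
  also have "\<dots> = (1 - 2 * lam) * (\<nu> * T)"
    using lam unfolding \<nu>_def by simp
  finally have "(1 - 2 * lam) * A \<le> (1 - 2 * lam) * (\<nu> * T)" .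
  then have A: "A \<le> \<nu> * T"
    using lam by (simp add: mult_le_cancel_left)
  have "2 * \<gamma> * T + 2 * lam * A \<le> 2 * \<gamma> * T + 2 * lam * (\<nu> * T)"
    using A lam by (simp add: mult_left_mono)
  also have "\<dots> = (\<nu> - 1) * T"
    using lam unfolding \<nu>_def by (simp add: field_simps)
  also have "\<dots> \<le> ((1 + 2 * \<gamma>bar) / (1 - 2 * lambar) - 1) * T"
    unfolding \<nu>_def T_def using \<gamma> lam by (intro mult_right_mono diff_right_mono frac_le) auto
  finally show ?thesis
    using inexact_proj_dist_sq_le[OF w \<phi> z \<theta>] unfolding T_def A_def by linarith
qed

lemma eps_subgradient_step_dist_sq_le:
  fixes x p s :: "'a::real_inner"
  assumes s: "s \<in> eps_subdiff f \<epsilon> x" and t: "0 \<le> t"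
  shows "(norm (x - t *\<^sub>R s - p))\<^sup>2 \<le> (norm (x - p))\<^sup>2 - 2 * t * (f x - f p - \<epsilon>) + t\<^sup>2 * (norm s)\<^sup>2"
proof -
  have "f x + inner s (p - x) - \<epsilon> \<le> f p"
    using s unfolding eps_subdiff_def by blast
  then have "f x - f p - \<epsilon> \<le> inner s (x - p)"
    by (simp add: inner_diff_right)
  then have subgrad: "t * (f x - f p - \<epsilon>) \<le> t * inner s (x - p)"
    using t by (rule mult_left_mono)
  have "(norm (x - t *\<^sub>R s - p))\<^sup>2 = (norm ((x - p) - t *\<^sub>R s))\<^sup>2"
    by (simp add: algebra_simps)
  also have "\<dots> = (norm (x - p))\<^sup>2 - 2 * (t * inner s (x - p)) + t\<^sup>2 * (norm s)\<^sup>2"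
    by (simp only: power2_norm_eq_inner)
      (simp add: inner_diff_left inner_diff_right inner_commute power2_eq_square)
  finally show ?thesis
    using subgrad by linarith
qed

lemma polyak_step_dist_sq_le:
  fixes x w p s :: "'a::real_inner"
  assumes w: "w \<in> inexact_proj C \<phi> x (x - t *\<^sub>R s)" and \<phi>: "rel_err_tol \<gamma> \<theta> lam \<phi>"
    and x: "x \<in> C" and p: "p \<in> C" and \<theta>: "\<theta> \<le> 1/2"
    and \<gamma>: "0 \<le> \<gamma>" "\<gamma> \<le> \<gamma>bar" and lam: "0 \<le> lam" "lam \<le> lambar" "lambar < 1/2"
    and s: "s \<in> eps_subdiff f \<epsilon> x" "s \<noteq> 0"
    and \<epsilon>: "\<epsilon> \<le> \<mu> * \<beta> * (f x - f p)" and gap: "0 \<le> f x - f p"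
    and t: "0 \<le> t" "t = \<beta> * (f x - f p) / (norm s)\<^sup>2"
    and \<beta>: "\<beta> * (2 * \<mu> + (1 + 2 * \<gamma>bar) / (1 - 2 * lambar)) \<le> 1"
  shows "(norm (w - p))\<^sup>2 \<le> (norm (x - p))\<^sup>2 - t * (f x - f p)"
proof -
  define \<nu> where "\<nu> = (1 + 2 * \<gamma>bar) / (1 - 2 * lambar)"
  define d where "d = f x - f p"
  have t_sq: "t\<^sup>2 * (norm s)\<^sup>2 = t * (\<beta> * d)"
    using t s unfolding d_def by (simp add: power2_eq_square)
  have "(norm (w - p))\<^sup>2 \<le> (norm (x - t *\<^sub>R s - p))\<^sup>2 + (\<nu> - 1) * t\<^sup>2 * (norm s)\<^sup>2"
    using inexact_proj_dist_sq_le_uniform[OF w \<phi> x p \<theta> \<gamma> lam] t(1)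
    unfolding \<nu>_def by (simp add: power_mult_distrib mult.assoc)
  also have "\<dots> \<le> (norm (x - p))\<^sup>2 - 2 * t * (d - \<epsilon>) + \<nu> * (t\<^sup>2 * (norm s)\<^sup>2)"
    using eps_subgradient_step_dist_sq_le[OF s(1) t(1), of p] unfolding d_def
    by (simp add: algebra_simps)
  also have "\<dots> = (norm (x - p))\<^sup>2 - 2 * t * (d - \<epsilon>) + \<nu> * (t * (\<beta> * d))"
    unfolding t_sq ..
  also have "\<dots> \<le> (norm (x - p))\<^sup>2 - t * d * (2 - \<beta> * (2 * \<mu> + \<nu>))"
    using mult_left_mono[OF \<epsilon> t(1)] unfolding d_def by (simp add: algebra_simps)
  also have "\<dots> \<le> (norm (x - p))\<^sup>2 - t * d"
    using mult_left_mono[of 1 "2 - \<beta> * (2 * \<mu> + \<nu>)" "t * d"] \<beta> t(1) gap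
    unfolding \<nu>_def d_def by simp
  finally show ?thesis
    unfolding d_def .
qed

lemma summable_decrements:
  fixes u a :: "nat \<Rightarrow> real"
  assumes a: "\<And>k. 0 \<le> a k" and u: "\<And>k. 0 \<le> u k"
    and decr: "\<And>k. u (Suc k) \<le> u k - a k"
  shows "summable a"
proof (rule summableI_nonneg_bounded[OF a])
  fix n
  have "(\<Sum>k<n. a k) + u n \<le> u 0"
  proof (induction n)
    case (Suc n)
    then show ?case using decr[of n] by simp
  qed simp
  then show "(\<Sum>k<n. a k) \<le> u 0"
    using u[of n] by linarith
qed

lemma tendsto_zero_of_summable_weighted_square:
  fixes d \<beta> n :: "nat \<Rightarrow> real"
  assumes sum: "summable (\<lambda>k. \<beta> k * (d k)\<^sup>2 / (n k)\<^sup>2)"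
    and \<beta>: "0 < \<beta>lo" "\<And>k. \<beta>lo \<le> \<beta> k"
    and n: "\<And>k. 0 < n k" "\<And>k. n k \<le> M"
  shows "d \<longlonglongrightarrow> 0"
proof -
  have bound: "(d k)\<^sup>2 \<le> M\<^sup>2 / \<beta>lo * (\<beta> k * (d k)\<^sup>2 / (n k)\<^sup>2)" for k
  proof -
    have "(d k)\<^sup>2 * (n k)\<^sup>2 \<le> (d k)\<^sup>2 * M\<^sup>2"
      using n[of k] by (intro mult_left_mono power_mono) auto
    then have "\<beta>lo * ((d k)\<^sup>2 * (n k)\<^sup>2) \<le> \<beta> k * ((d k)\<^sup>2 * M\<^sup>2)"
      by (rule mult_mono[OF \<beta>(2)]) (use \<beta>(1) \<beta>(2)[of k] in auto)
    then show ?thesis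
      using \<beta>(1) n(1)[of k] by (simp add: field_simps)
  qed
  have "summable (\<lambda>k. (d k)\<^sup>2)"
    using bound by (intro summable_comparison_test'[OF summable_mult[OF sum, of "M\<^sup>2 / \<beta>lo"]]) auto
  then show ?thesis
    using summable_LIMSEQ_zero by fastforce
qed

lemma eps_subdiff_norm_le:
  fixes x s :: "'a::real_inner"
  assumes s: "s \<in> eps_subdiff f \<epsilon> x" and B: "\<And>y. y \<in> cball x 1 \<Longrightarrow> \<bar>f y\<bar> \<le> B"
  shows "norm s \<le> 2 * B + \<epsilon>"
proof -
  have "f x + inner s (x + sgn s - x) - \<epsilon> \<le> f (x + sgn s)"
    using s unfolding eps_subdiff_def by blast
  moreover have "inner s (x + sgn s - x) = norm s"
    by (cases "s = 0") (auto simp: sgn_div_norm power2_norm_eq_inner[symmetric] power2_eq_square)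
  moreover have "\<bar>f (x + sgn s)\<bar> \<le> B" "\<bar>f x\<bar> \<le> B"
    by (auto intro!: B simp: dist_norm norm_sgn)
  ultimately show ?thesis by linarith
qed

lemma opt_val_eq_of_opt_set:
  assumes "p \<in> opt_set f C"
  shows "opt_val f C = f p"
  using assms unfolding opt_val_def opt_set_def
  by (intro antisym cINF_lower cINF_greatest) (auto simp: bdd_below_def)

lemma eps_subdiff_bounded:
  fixes f :: "'a::euclidean_space \<Rightarrow> real"
  assumes f: "convex_on UNIV f" and X: "bounded X"
  obtains M where "\<And>x \<epsilon> s. x \<in> X \<Longrightarrow> \<epsilon> \<le> E \<Longrightarrow> s \<in> eps_subdiff f \<epsilon> x \<Longrightarrow> norm s \<le> M"
proof -
  obtain a r where X_sub: "X \<subseteq> cball a r"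
    using X bounded_subset_cball by blast
  have "continuous_on (cball a (r + 1)) f"
    using convex_on_continuous[OF open_UNIV f] continuous_on_subset by blast
  then have "bounded (f ` cball a (r + 1))"
    by (intro compact_imp_bounded compact_continuous_image) auto
  then obtain B where B: "\<forall>y\<in>cball a (r + 1). \<bar>f y\<bar> \<le> B"
    unfolding bounded_iff by auto
  have "norm s \<le> 2 * B + E" if "x \<in> X" "\<epsilon> \<le> E" "s \<in> eps_subdiff f \<epsilon> x" for x \<epsilon> s
  proof -
    have "cball x 1 \<subseteq> cball a (r + 1)"
      using X_sub \<open>x \<in> X\<close> by (auto simp: cball_subset_cball_iff dist_commute)
    then have "norm s \<le> 2 * B + \<epsilon>"
      using eps_subdiff_norm_le[OF that(3), of B] B by blast
    then show ?thesis
      using that(2) by linarith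
  qed
  then show ?thesis
    using that by blast
qed

lemma fejer_monotone_le:
  assumes fejer: "\<And>k. dist (x (Suc k)) p \<le> dist (x k) p" and "m \<le> n"
  shows "dist (x n) p \<le> dist (x m) p"
  using lift_Suc_antimono_le[of "\<lambda>k. dist (x k) p", OF fejer \<open>m \<le> n\<close>] .

lemma fejer_monotone_bounded:
  assumes fejer: "\<And>k. dist (x (Suc k)) p \<le> dist (x k) p"
  shows "bounded (range x)"
  unfolding bounded_def
  using fejer_monotone_le[of x p, OF fejer] by (metis dist_commute image_iff le0)

lemma fejer_monotone_convergent:
  fixes x :: "nat \<Rightarrow> 'a::heine_borel"
  assumes "p \<in> S"
    and fejer: "\<And>p k. p \<in> S \<Longrightarrow> dist (x (Suc k)) p \<le> dist (x k) p"
    and cluster: "\<And>r l. strict_mono r \<Longrightarrow> (x \<circ> r) \<longlonglongrightarrow> l \<Longrightarrow> l \<in> S"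
  shows "\<exists>l\<in>S. x \<longlonglongrightarrow> l"
proof -
  obtain l r where r: "strict_mono r" and lim: "(x \<circ> r) \<longlonglongrightarrow> l"
    using bounded_imp_convergent_subsequence fejer_monotone_bounded fejer \<open>p \<in> S\<close> by blast
  have l: "l \<in> S"
    using cluster[OF r lim] .
  have "x \<longlonglongrightarrow> l"
  proof (rule metric_LIMSEQ_I)
    fix e :: real
    assume "0 < e"
    then obtain N where "dist (x (r N)) l < e"
      using lim by (auto simp: lim_sequentially)
    then show "\<exists>N. \<forall>n\<ge>N. dist (x n) l < e"
      using fejer_monotone_le[of x l, OF fejer[OF l]] le_less_trans by blast
  qed
  then show ?thesis
    using l by blast
qed

lemma fejer_convergent_to_minimizer:
  fixes f :: "'a::heine_borel \<Rightarrow> real"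
  assumes f: "continuous_on UNIV f" and C: "closed C" and xC: "\<And>k. x k \<in> C"
    and p: "p \<in> opt_set f C"
    and fejer: "\<And>q k. q \<in> opt_set f C \<Longrightarrow> dist (x (Suc k)) q \<le> dist (x k) q"
    and val: "(\<lambda>k. f (x k)) \<longlonglongrightarrow> opt_val f C"
  shows "\<exists>l\<in>opt_set f C. x \<longlonglongrightarrow> l"
proof (rule fejer_monotone_convergent[where x = x, OF p fejer])
  fix r l
  assume r: "strict_mono r" and lim: "(x \<circ> r) \<longlonglongrightarrow> l"
  have "l \<in> C"
    using closed_sequentially[OF C] xC lim by (metis comp_apply)
  moreover have "f l = opt_val f C"
  proof (rule LIMSEQ_unique)
    show "(\<lambda>n. f ((x \<circ> r) n)) \<longlonglongrightarrow> f l"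
      using continuous_on_tendsto_compose[OF f lim] by simp
    show "(\<lambda>n. f ((x \<circ> r) n)) \<longlonglongrightarrow> opt_val f C"
      using LIMSEQ_subseq_LIMSEQ[OF val r] by (simp add: comp_def)
  qed
  ultimately show "l \<in> opt_set f C"
    using p opt_val_eq_of_opt_set[OF p] unfolding opt_set_def by auto
qed

theorem mainTheorem8:
  fixes f :: "'a::euclidean_space \<Rightarrow> real" and C :: "'a set"
    and x s :: "nat \<Rightarrow> 'a" and \<epsilon> t \<beta> \<gamma> \<theta> lam :: "nat \<Rightarrow> real"
    and \<phi> :: "nat \<Rightarrow> 'a \<Rightarrow> 'a \<Rightarrow> 'a \<Rightarrow> real"
    and \<gamma>bar \<theta>bar lambar \<mu> \<beta>lo \<beta>hi :: real
  assumes f_convex: "convex_on UNIV f"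
    and C_closed: "closed C" and C_convex: "convex C" and C_ne: "C \<noteq> {}"
    \<comment> \<open>standing assumptions on the tolerance parameters\<close>
    and \<gamma>bar: "0 \<le> \<gamma>bar" and \<theta>bar: "0 \<le> \<theta>bar" "\<theta>bar < 1/2"
    and lambar: "0 \<le> lambar" "lambar < 1/2"
    and \<gamma>k: "\<And>k. 0 \<le> \<gamma> k \<and> \<gamma> k < \<gamma>bar"
    and \<theta>k: "\<And>k. 0 \<le> \<theta> k \<and> \<theta> k < \<theta>bar"
    and lamk: "\<And>k. 0 \<le> lam k \<and> lam k < lambar"
    and \<phi>k: "\<And>k. rel_err_tol (\<gamma> k) (\<theta> k) (lam k) (\<phi> k)"
    \<comment> \<open>Subgradient-InexP method, generating an infinite sequence\<close>
    and x0: "x 0 \<in> C"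
    and no_stop: "\<And>k. 0 \<notin> eps_subdiff f 0 (x k)"
    and s_sub: "\<And>k. s k \<in> eps_subdiff f (\<epsilon> k) (x k)"
    and s_nz: "\<And>k. s k \<noteq> 0"
    and t_pos: "\<And>k. t k > 0"
    and x_step: "\<And>k. x (Suc k) \<in> inexact_proj C (\<phi> k) (x k) (x k - t k *\<^sub>R s k)"
    \<comment> \<open>Polyak's stepsize rule\<close>
    and opt_ne: "opt_set f C \<noteq> {}"
    and \<mu>: "0 \<le> \<mu>" and \<beta>lo: "0 < \<beta>lo" and \<beta>hi: "0 < \<beta>hi"
    and \<epsilon>_noninc: "decseq \<epsilon>"
    and \<beta>_bounds: "\<And>k. \<beta>lo \<le> \<beta> k \<and> \<beta> k \<le> \<beta>hi"
    and \<beta>hi_lt: "\<beta>hi < 1 / (2 * \<mu> + (1 + 2 * \<gamma>bar) / (1 - 2 * lambar))"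
    and \<epsilon>_bounds: "\<And>k. 0 < \<epsilon> k \<and> \<epsilon> k \<le> \<mu> * \<beta> k * (f (x k) - opt_val f C)"
    and t_def: "\<And>k. t k = \<beta> k * (f (x k) - opt_val f C) / (norm (s k))\<^sup>2"
  shows "\<exists>xs\<in>opt_set f C. x \<longlonglongrightarrow> xs"
proof -
  define fs where "fs = opt_val f C"
  define gap where "gap k = f (x k) - fs" for k
  obtain p where p: "p \<in> opt_set f C"
    using opt_ne by blast
  have xC: "x k \<in> C" for k
    by (induction k) (use x0 x_step in \<open>auto simp: inexact_proj_def\<close>)
  have gap_pos: "0 < gap k" for k
    using \<epsilon>_bounds[of k] \<mu> \<beta>_bounds[of k] \<beta>lo unfolding gap_def fs_def
    by (smt (verit) mult_nonneg_nonpos zero_le_mult_iff)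
  have \<beta>_small: "\<beta> k * (2 * \<mu> + (1 + 2 * \<gamma>bar) / (1 - 2 * lambar)) \<le> 1"
    (is "_ * ?\<rho> \<le> 1") for k
  proof -
    have "0 < ?\<rho>"
      using \<mu> \<gamma>bar lambar by (simp add: add_nonneg_pos)
    then have "\<beta> k * ?\<rho> \<le> \<beta>hi * ?\<rho>" and "\<beta>hi * ?\<rho> < 1"
      using \<beta>_bounds[of k] \<beta>hi_lt by (simp_all add: less_divide_eq)
    then show ?thesis by linarith
  qed
  have descent: "(norm (x (Suc k) - q))\<^sup>2 \<le> (norm (x k - q))\<^sup>2 - t k * gap k"
    if q: "q \<in> opt_set f C" for q k
    using polyak_step_dist_sq_le[where p = q and f = f and \<epsilon> = "\<epsilon> k" and \<mu> = \<mu> and \<beta> = "\<beta> k"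
        and \<gamma>bar = \<gamma>bar and lambar = lambar, OF x_step[of k] \<phi>k[of k] xC[of k]]
      q \<theta>k[of k] \<theta>bar \<gamma>k[of k] lamk[of k] lambar s_sub s_nz \<epsilon>_bounds[of k] gap_pos[of k]
      t_pos[of k] t_def[of k] \<beta>_small[of k]
    unfolding gap_def fs_def opt_val_eq_of_opt_set[OF q] by (auto simp: opt_set_def less_imp_le)
  have decrement_nonneg: "0 \<le> t k * gap k" for k
    using t_pos[of k] gap_pos[of k] by simp
  have fejer: "dist (x (Suc k)) q \<le> dist (x k) q" if "q \<in> opt_set f C" for q k
  proof -
    have "(norm (x (Suc k) - q))\<^sup>2 \<le> (norm (x k - q))\<^sup>2"
      using descent[OF that, of k] decrement_nonneg[of k] by linarith
    then show ?thesis
      unfolding dist_norm using power2_le_imp_le norm_ge_zero by blast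
  qed
  have "summable (\<lambda>k. t k * gap k)"
    by (rule summable_decrements[where u = "\<lambda>k. (norm (x k - p))\<^sup>2",
          OF decrement_nonneg _ descent[OF p]]) simp
  moreover have "t k * gap k = \<beta> k * (gap k)\<^sup>2 / (norm (s k))\<^sup>2" for k
    using t_def[of k] unfolding gap_def fs_def by (simp add: power2_eq_square)
  moreover obtain M where "\<And>k. norm (s k) \<le> M"
    using eps_subdiff_bounded[OF f_convex fejer_monotone_bounded[of x p, OF fejer[OF p]],
        of "\<epsilon> 0"] s_sub \<epsilon>_noninc by (metis decseq_def le0 rangeI)
  ultimately have "gap \<longlonglongrightarrow> 0"
    using \<beta>lo \<beta>_bounds s_nz
    by (intro tendsto_zero_of_summable_weighted_square[where \<beta> = \<beta> and n = "\<lambda>k. norm (s k)"]) auto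
  then have "(\<lambda>k. f (x k)) \<longlonglongrightarrow> fs"
    unfolding gap_def using Lim_null by blast
  then show ?thesis
    using fejer_convergent_to_minimizer[where x = x, OF convex_on_continuous[OF open_UNIV f_convex]
        C_closed xC p fejer]
    unfolding fs_def by blast
qed

end
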